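(* For every $A \in S(4,\mathbb{R})$ and every $P \in \operatorname{Sp}(4)$, we have $\operatorname{Pf}(P^T A P) = \operatorname{Pf}(A)$ and $\operatorname{s}(P^T A P) = \operatorname{s}(A)$. That is, the Pfaffian and the sum function are invariant under the action $\rho(P,A) = P^T A P$ of $\operatorname{Sp}(4)$ on $S(4,\mathbb{R})$.
   Context: $S(4,\mathbb{R}) = \{A \in M(4,\mathbb{R}) : A^T = -A,\ \det A \neq 0\}$. $J$ is the $4\times 4$ block-diagonal matrix $\operatorname{diag}(J_0,J_0)$ with $J_0 = \begin{bmatrix} 0 & 1 \\ -1 & 0\end{bmatrix}$, and $\operatorname{Sp}(4) = \{P \in M(4,\mathbb{R}) : P^T J P = J\}$. For $A = \begin{bmatrix} 0 & a & b & c \\ -a & 0 & d & e \\ -b & -d & 0 & f \\ -c & -e & -f & 0\end{bmatrix}$, the Pfaffian is $\operatorname{Pf}(A) = af - be + cd$ and the sum function is $\operatorname{s}(A) = a + f$. *)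

theory Defs
  imports "HOL-Analysis.Analysis" "HOL-Library.Numeral_Type"
begin

text \<open>4x4 real matrices are rendered as real^4^4. The index type 4 has the four
elements 1, 2, 3, 4 (where the numeral 4 denotes the fourth index, equal to 0 in
the ring structure of type 4).\<close>

definition skew_invertible :: "(real^4^4) set" where
  "skew_invertible = {A. transpose A = - A \<and> det A \<noteq> 0}"

definition J0 :: "real^4^4" where
  "J0 = (\<chi> i j. if (i = 1 \<and> j = 2) \<or> (i = 3 \<and> j = 4) then 1
               else if (i = 2 \<and> j = 1) \<or> (i = 4 \<and> j = 3) then -1 else 0)"

definition Sp4 :: "(real^4^4) set" where
  "Sp4 = {P. transpose P ** J0 ** P = J0}"

definition Pf :: "real^4^4 \<Rightarrow> real" where
  "Pf A = A$1$2 * A$3$4 - A$1$3 * A$2$4 + A$1$4 * A$2$3"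

definition sfun :: "real^4^4 \<Rightarrow> real" where
  "sfun A = A$1$2 + A$3$4"

end

theory Submission
  imports Defs
begin

(* The Pfaffian is a relative invariant of congruence: Pf (P^T A P) = det P * Pf A.
   Since P^T J0 P = J0 and Pf J0 = 1, every P in Sp(4) has det P = 1, so Pf is invariant.
   For skew A the sum function is s(A) = - tr (J0 A) / 2, and tr (J0 P^T A P) = tr (P J0 P^T A)
   = tr (J0 A) because Sp(4) is closed under transposition. *)

lemma det_4:
  "det (A::'a::comm_ring_1^4^4) =
     A$1$1 * A$2$2 * A$3$3 * A$4$4 - A$1$1 * A$2$2 * A$3$4 * A$4$3
   - A$1$1 * A$2$3 * A$3$2 * A$4$4 + A$1$1 * A$2$3 * A$3$4 * A$4$2
   + A$1$1 * A$2$4 * A$3$2 * A$4$3 - A$1$1 * A$2$4 * A$3$3 * A$4$2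
   - A$1$2 * A$2$1 * A$3$3 * A$4$4 + A$1$2 * A$2$1 * A$3$4 * A$4$3
   + A$1$2 * A$2$3 * A$3$1 * A$4$4 - A$1$2 * A$2$3 * A$3$4 * A$4$1
   - A$1$2 * A$2$4 * A$3$1 * A$4$3 + A$1$2 * A$2$4 * A$3$3 * A$4$1
   + A$1$3 * A$2$1 * A$3$2 * A$4$4 - A$1$3 * A$2$1 * A$3$4 * A$4$2
   - A$1$3 * A$2$2 * A$3$1 * A$4$4 + A$1$3 * A$2$2 * A$3$4 * A$4$1
   + A$1$3 * A$2$4 * A$3$1 * A$4$2 - A$1$3 * A$2$4 * A$3$2 * A$4$1
   - A$1$4 * A$2$1 * A$3$2 * A$4$3 + A$1$4 * A$2$1 * A$3$3 * A$4$2
   + A$1$4 * A$2$2 * A$3$1 * A$4$3 - A$1$4 * A$2$2 * A$3$3 * A$4$1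
   - A$1$4 * A$2$3 * A$3$1 * A$4$2 + A$1$4 * A$2$3 * A$3$2 * A$4$1"
proof -
  have UNIV_4: "(UNIV :: 4 set) = {1, 2, 3, 4}"
    using exhaust_4 by auto
  have f1: "finite {2::4, 3, 4}" "1 \<notin> {2::4, 3, 4}" by auto
  have f2: "finite {3::4, 4}" "2 \<notin> {3::4, 4}" by auto
  have f3: "finite {4::4}" "3 \<notin> {4::4}" by auto
  show ?thesis
    unfolding det_def UNIV_4
    unfolding sum_over_permutations_insert[OF f1]
    unfolding sum_over_permutations_insert[OF f2]
    unfolding sum_over_permutations_insert[OF f3]
    unfolding permutes_sing
    by (simp add: sign_swap_id permutation_swap_id permutation_compose sign_compose sign_id
        swap_id_eq algebra_simps)
qed

lemma skew_entry:
  fixes A :: "'a::ring_1^'n^'n"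
  assumes "transpose A = - A"
  shows "A$i$j = - A$j$i"
proof -
  have "transpose A $ j $ i = (- A) $ j $ i" using assms by simp
  thus ?thesis by (simp add: transpose_def)
qed

lemma Pf_congruence:
  fixes A P :: "real^4^4"
  assumes skew: "transpose A = - A"
  shows "Pf (transpose P ** A ** P) = det P * Pf A"
proof -
  have diag: "A$i$i = 0" for i
    using skew_entry[OF skew, of i i] by simp
  have "A$2$1 = - A$1$2" "A$3$1 = - A$1$3" "A$4$1 = - A$1$4"
       "A$3$2 = - A$2$3" "A$4$2 = - A$2$4" "A$4$3 = - A$3$4"
    using skew_entry[OF skew] by blast+
  then show ?thesis
    unfolding Pf_def det_4 matrix_matrix_mult_def transpose_def
    by (simp add: sum_4 diag algebra_simps)
qed

lemma J0_skew: "transpose J0 = - J0"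
  by (simp add: J0_def transpose_def vec_eq_iff forall_4)

lemma J0_squared: "J0 ** J0 = - mat 1"
  by (simp add: J0_def matrix_matrix_mult_def sum_4 mat_def vec_eq_iff forall_4)

lemma Pf_J0: "Pf J0 = 1"
  by (simp add: J0_def Pf_def)

lemma det_Sp4:
  assumes "P \<in> Sp4"
  shows "det P = 1"
proof -
  have "Pf J0 = det P * Pf J0"
    using Pf_congruence[OF J0_skew, of P] assms by (simp add: Sp4_def)
  thus ?thesis by (simp add: Pf_J0)
qed

lemma matrix_mul_lneg: "(- A) ** B = - (A ** (B::'a::ring_1^'n^'m))"
  by (simp add: matrix_matrix_mult_def vec_eq_iff sum_negf)

lemma matrix_mul_rneg: "A ** (- B) = - ((A::'a::ring_1^'m^'k) ** B)"
  by (simp add: matrix_matrix_mult_def vec_eq_iff sum_negf)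

lemma skew_congruence:
  fixes A P :: "'a::comm_ring_1^'n^'n"
  assumes "transpose A = - A"
  shows "transpose (transpose P ** A ** P) = - (transpose P ** A ** P)"
  by (simp add: assms matrix_transpose_mul matrix_mul_assoc matrix_mul_lneg matrix_mul_rneg)

lemma symplectic_transpose:
  fixes P J :: "'a::field^'n^'n"
  assumes J_squared: "J ** J = - mat 1" and sympl: "transpose P ** J ** P = J"
  shows "P ** J ** transpose P = J"
proof -
  \<comment> \<open>The left inverse of P is - J P^T J, hence it is also a right inverse.\<close>
  have "- (J ** transpose P ** J) ** P = - (J ** (transpose P ** J ** P))"
    by (simp add: matrix_mul_assoc matrix_mul_lneg)
  also have "\<dots> = mat 1"
    using J_squared sympl by (simp add: matrix_mul_rneg)
  finally have "- (J ** transpose P ** J) ** P = mat 1" .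
  then have "P ** - (J ** transpose P ** J) = mat 1"
    using matrix_left_right_inverse by blast
  then have PJPJ: "- (P ** J ** transpose P ** J) ** J = J"
    by (simp add: matrix_mul_assoc matrix_mul_lneg matrix_mul_rneg)
  have "P ** J ** transpose P = - ((P ** J ** transpose P) ** (J ** J))"
    using J_squared by (simp add: matrix_mul_rneg)
  also have "\<dots> = - (P ** J ** transpose P ** J) ** J"
    by (simp add: matrix_mul_assoc matrix_mul_lneg)
  finally show ?thesis
    using PJPJ by simp
qed

lemma trace_congruence:
  fixes A P J :: "'a::comm_semiring_1^'n^'n"
  assumes "P ** J ** transpose P = J"
  shows "trace (J ** (transpose P ** A ** P)) = trace (J ** A)"
proof -
  have "trace (J ** (transpose P ** A ** P)) = trace ((J ** transpose P ** A) ** P)"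
    by (simp add: matrix_mul_assoc)
  also have "\<dots> = trace (P ** (J ** transpose P ** A))"
    by (rule trace_mul_sym)
  also have "\<dots> = trace ((P ** J ** transpose P) ** A)"
    by (simp add: matrix_mul_assoc)
  finally show ?thesis
    using assms by simp
qed

lemma sfun_eq_trace:
  fixes A :: "real^4^4"
  assumes "transpose A = - A"
  shows "sfun A = - trace (J0 ** A) / 2"
proof -
  have "A$2$1 = - A$1$2" "A$4$3 = - A$3$4"
    using skew_entry[OF assms] by blast+
  then show ?thesis
    by (simp add: sfun_def trace_def J0_def matrix_matrix_mult_def sum_4)
qed

theorem theorem2p1:
  fixes A P :: "real^4^4"
  assumes "A \<in> skew_invertible" and "P \<in> Sp4"
  shows "Pf (transpose P ** A ** P) = Pf A \<and> sfun (transpose P ** A ** P) = sfun A"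
proof -
  have skew: "transpose A = - A"
    using assms(1) by (simp add: skew_invertible_def)
  have "P ** J0 ** transpose P = J0"
    using symplectic_transpose[OF J0_squared] assms(2) by (simp add: Sp4_def)
  then have "trace (J0 ** (transpose P ** A ** P)) = trace (J0 ** A)"
    by (rule trace_congruence)
  then have "sfun (transpose P ** A ** P) = sfun A"
    using sfun_eq_trace[OF skew] sfun_eq_trace[OF skew_congruence[OF skew]] by simp
  moreover have "Pf (transpose P ** A ** P) = Pf A"
    using Pf_congruence[OF skew] det_Sp4[OF assms(2)] by simp
  ultimately show ?thesis by simp
qed

end
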